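(* Let $p,q,r\ge1$ and $E$ be positive integers, $A\in[-E,E]^{p\times q}$ and $B\in[-E,E]^{q\times r}$ integer matrices, and set $A_{p,j}:=0$ for all $j$. Let the alphabet consist of pairwise distinct characters $x_0,\dots,x_{p-1},x_p^{(0)},\dots,x_p^{(r-1)},x_{p+1},\dots,x_{2p},y_0,\dots,y_{2p+q-1}$. For $\ell\in[0,r)$ let $X_\ell:=x_0\cdots x_{p-1}x_p^{(\ell)}x_{p+1}\cdots x_{2p}$ (length $2p+1$) and $Y:=y_0\cdots y_{2p+q-1}$. Let $D,F$ be positive integers with $E\ll D\ll F$, where $a\ll b$ means $a(|X_\ell|+|Y|)<b$. Define the weight function $w$ by: $w(\sigma,\varepsilon)=w(\varepsilon,\sigma)=F$ for every character $\sigma$; $w(x_i,y_{i+j})=F+A_{i,j}-A_{i+1,j}+(q-j)D$ for $i\in[0,p)$, $j\in[0,q)$; $w(x_p^{(\ell)},y_{p+j})=F+B_{j,\ell}$ for $j\in[0,q)$; $w(x_{p+i},y_{p+i+j})=F+(j+1)D$ for $i\in[1,p]$, $j\in[0,q)$; $w(\sigma,\sigma)=0$; and $w(\sigma,\rho)=2F$ for all other pairs. Then for every $\ell\in[0,r)$ and every $i\in[0,p)$, $$\mathrm{ed}^w\big(X_\ell[i\,.\,.\,|X_\ell|-i),Y\big)=|Y|\,F+(p-i)(q+1)D+\min_j\{A_{i,j}+B_{j,\ell}\},$$ and an optimal alignment deletes no characters of $X_\ell$.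
   Context: $X[a\,.\,.\,b)$ denotes the fragment $X[a]\cdots X[b-1]$. $\mathrm{ed}^w(X,Y)$ is the minimum total cost of an alignment of $X$ onto $Y$, i.e., of a monotone lattice path from $(0,0)$ to $(|X|,|Y|)$ with steps $(1,0)$ from $(x,y)$ (deleting $X[x]$, cost $w(X[x],\varepsilon)$), $(0,1)$ (inserting $Y[y]$, cost $w(\varepsilon,Y[y])$), and $(1,1)$ (aligning $X[x]$ to $Y[y]$, cost $w(X[x],Y[y])$). *)

theory Defs
  imports Main
begin

text \<open>Characters of the alphabet: Xc i is x_i (used for i in [0,p) and [p+1,2p]),
  Xp l is x_p^(l), Yc k is y_k. Distinct constructors/arguments give pairwise distinct characters.\<close>
datatype chr = Xc nat | Xp nat | Yc nat

datatype step = Del | Ins | Match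

text \<open>Weight functions: None stands for the empty string epsilon.\<close>
type_synonym weight = "chr option \<Rightarrow> chr option \<Rightarrow> int"

fun acost :: "weight \<Rightarrow> chr list \<Rightarrow> chr list \<Rightarrow> step list \<Rightarrow> int option" where
  "acost w [] [] [] = Some 0"
| "acost w (x # xs) ys (Del # ss) = map_option ((+) (w (Some x) None)) (acost w xs ys ss)"
| "acost w xs (y # ys) (Ins # ss) = map_option ((+) (w None (Some y))) (acost w xs ys ss)"
| "acost w (x # xs) (y # ys) (Match # ss) = map_option ((+) (w (Some x) (Some y))) (acost w xs ys ss)"
| "acost w _ _ _ = None"

definition ed_w :: "weight \<Rightarrow> chr list \<Rightarrow> chr list \<Rightarrow> int" where
  "ed_w w X Y = Min {c. \<exists>ss. acost w X Y ss = Some c}"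

definition frag :: "'a list \<Rightarrow> nat \<Rightarrow> nat \<Rightarrow> 'a list" where
  "frag X a b = drop a (take b X)"

definition Xword :: "nat \<Rightarrow> nat \<Rightarrow> chr list" where
  "Xword p l = map (\<lambda>k. if k = p then Xp l else Xc k) [0..<2*p+1]"

definition Yword :: "nat \<Rightarrow> nat \<Rightarrow> chr list" where
  "Yword p q = map Yc [0..<2*p+q]"

definition Aext :: "nat \<Rightarrow> (nat \<Rightarrow> nat \<Rightarrow> int) \<Rightarrow> nat \<Rightarrow> nat \<Rightarrow> int" where
  "Aext p A i j = (if i = p then 0 else A i j)"

definition wgt :: "nat \<Rightarrow> nat \<Rightarrow> (nat \<Rightarrow> nat \<Rightarrow> int) \<Rightarrow> (nat \<Rightarrow> nat \<Rightarrow> int)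
    \<Rightarrow> int \<Rightarrow> int \<Rightarrow> weight" where
  "wgt p q A B D F a b =
    (case (a, b) of
       (Some s, None) \<Rightarrow> F
     | (None, Some s) \<Rightarrow> F
     | (None, None) \<Rightarrow> 0
     | (Some s, Some t) \<Rightarrow>
         (if s = t then 0 else
          (case (s, t) of
             (Xc i, Yc k) \<Rightarrow>
                (if i < p \<and> i \<le> k \<and> k < i + q then
                   F + Aext p A i (k - i) - Aext p A (i + 1) (k - i) + int (q - (k - i)) * D
                 else if p + 1 \<le> i \<and> i \<le> 2 * p \<and> i \<le> k \<and> k < i + q then
                   F + int (k - i + 1) * D
                 else 2 * F)
           | (Xp l, Yc k) \<Rightarrow> (if p \<le> k \<and> k < p + q then F + B (k - p) l else 2 * F)
           | _ \<Rightarrow> 2 * F)))"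

end

theory Submission
  imports Defs
begin

text \<open>The lower bound is a potential argument. At a grid point (t, k) of the alignment graph
  (characters x_t and y_k are next), let c be k - t clamped to [0, q). The potential charges F
  for every remaining character of Y, plus the D- and A/B-terms of completing the alignment by
  matching the remaining x's along diagonal c. No step makes the potential drop by more than
  its cost: a deletion pays an extra F, which exceeds every D-term since D \<ll> F; moving to a
  later diagonal costs at least one D, because more characters of the right half than of the
  left half remain, and this exceeds every A/B-term since E \<ll> D; a match on the diagonal
  pays exactly the drop, since these costs telescope. So every alignment costs at least the
  potential at (i, 0), and a single diagonal alignment attains it.\<close>

lemma acost_length_le: "acost w X Y ss = Some c \<Longrightarrow> length ss \<le> length X + length Y"
  by (induction w X Y ss arbitrary: c rule: acost.induct) auto

lemma finite_acost_values: "finite {c. \<exists>ss. acost w X Y ss = Some c}"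
proof -
  have "UNIV = {Del, Ins, Match}" using step.exhaust by auto
  then have "finite (UNIV :: step set)" by (metis finite.emptyI finite.insertI)
  then have "finite {ss :: step list. length ss \<le> length X + length Y}"
    using finite_lists_length_le[OF \<open>finite UNIV\<close>] by simp
  moreover have "{c. \<exists>ss. acost w X Y ss = Some c}
      \<subseteq> (\<lambda>ss. the (acost w X Y ss)) ` {ss. length ss \<le> length X + length Y}"
    using acost_length_le by force
  ultimately show ?thesis by (meson finite_imageI finite_subset)
qed

lemma ed_w_eqI:
  assumes "acost w X Y ss = Some c"
    and "\<And>ss' c'. acost w X Y ss' = Some c' \<Longrightarrow> c \<le> c'"
  shows "ed_w w X Y = c"
  unfolding ed_w_def using assms finite_acost_values by (intro Min_eqI) auto

lemma acost_ge_potential: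
  fixes \<Phi> :: "nat \<Rightarrow> nat \<Rightarrow> int"
  assumes final: "\<Phi> (length X) (length Y) \<le> 0"
    and del: "\<And>s k. s < length X \<Longrightarrow> k \<le> length Y \<Longrightarrow>
      \<Phi> s k \<le> w (Some (X ! s)) None + \<Phi> (Suc s) k"
    and ins: "\<And>s k. s \<le> length X \<Longrightarrow> k < length Y \<Longrightarrow>
      \<Phi> s k \<le> w None (Some (Y ! k)) + \<Phi> s (Suc k)"
    and match: "\<And>s k. s < length X \<Longrightarrow> k < length Y \<Longrightarrow>
      \<Phi> s k \<le> w (Some (X ! s)) (Some (Y ! k)) + \<Phi> (Suc s) (Suc k)"
    and cost: "acost w X Y ss = Some c"
  shows "\<Phi> 0 0 \<le> c"
proof -
  have "\<Phi> s k \<le> c"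
    if "s \<le> length X" "k \<le> length Y" "acost w (drop s X) (drop k Y) ss = Some c" for s k c
    using that
  proof (induction ss arbitrary: s k c)
    case Nil
    then show ?case using final by (cases "drop s X"; cases "drop k Y") auto
  next
    case (Cons st ss)
    consider (Del) "st = Del" | (Ins) "st = Ins" | (Match) "st = Match" by (cases st) auto
    then show ?case
    proof cases
      case Del
      then have "s < length X" using Cons.prems by (cases "s < length X") auto
      then obtain c' where "acost w (drop (Suc s) X) (drop k Y) ss = Some c'"
          and "c = w (Some (X ! s)) None + c'"
        using Cons.prems Del by (auto simp: Cons_nth_drop_Suc[symmetric])
      then show ?thesis
        using Cons.IH[of "Suc s" k c'] Cons.prems del[of s k] \<open>s < length X\<close> by simp
    next
      case Ins
      then have "k < length Y" using Cons.prems by (cases "k < length Y") auto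
      then obtain c' where "acost w (drop s X) (drop (Suc k) Y) ss = Some c'"
          and "c = w None (Some (Y ! k)) + c'"
        using Cons.prems Ins by (auto simp: Cons_nth_drop_Suc[symmetric])
      then show ?thesis
        using Cons.IH[of s "Suc k" c'] Cons.prems ins[of s k] \<open>k < length Y\<close> by simp
    next
      case Match
      then have "s < length X" "k < length Y" using Cons.prems
        by (cases "s < length X"; cases "k < length Y"; auto)+
      then obtain c' where "acost w (drop (Suc s) X) (drop (Suc k) Y) ss = Some c'"
          and "c = w (Some (X ! s)) (Some (Y ! k)) + c'"
        using Cons.prems Match by (auto simp: Cons_nth_drop_Suc[symmetric])
      then show ?thesis
        using Cons.IH[of "Suc s" "Suc k" c'] Cons.prems match[of s k]
          \<open>s < length X\<close> \<open>k < length Y\<close>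
        by simp
    qed
  qed
  from this[of 0 0 c] show ?thesis using cost by simp
qed

lemma acost_Ins_prefix:
  "acost w X (Y1 @ Y2) (replicate (length Y1) Ins @ ss)
     = map_option ((+) (\<Sum>y\<leftarrow>Y1. w None (Some y))) (acost w X Y2 ss)"
  by (induction Y1) (simp_all add: option.map_comp o_def add.assoc option.map_ident)

lemma acost_Match_prefix:
  "length X1 = length Y1 \<Longrightarrow>
   acost w (X1 @ X2) (Y1 @ Y2) (replicate (length X1) Match @ ss)
     = map_option ((+) (\<Sum>(x, y)\<leftarrow>zip X1 Y1. w (Some x) (Some y))) (acost w X2 Y2 ss)"
  by (induction X1 Y1 rule: list_induct2)
    (simp_all add: option.map_comp o_def add.assoc option.map_ident)

locale min_plus_gadget =
  fixes p q :: nat and E D F :: int and A B :: "nat \<Rightarrow> nat \<Rightarrow> int" and l i :: nat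
  assumes p_pos: "p \<ge> 1" and q_pos: "q \<ge> 1" and E_pos: "E > 0"
    and A_bounded: "\<forall>i<p. \<forall>j<q. -E \<le> A i j \<and> A i j \<le> E"
    and B_bounded: "\<forall>j<q. -E \<le> B j l \<and> B j l \<le> E"
    and E_ll_D: "E * int ((2*p+1) + (2*p+q)) < D"
    and D_ll_F: "D * int ((2*p+1) + (2*p+q)) < F"
    and i_less_p: "i < p"
begin

abbreviation w :: weight where "w \<equiv> wgt p q A B D F"

definition xend :: nat where "xend = 2*p + 1 - i"
definition ylen :: nat where "ylen = 2*p + q"
definition xchar :: "nat \<Rightarrow> chr" where "xchar t = (if t = p then Xp l else Xc t)"

abbreviation X_frag :: "chr list" where "X_frag \<equiv> map xchar [i..<xend]"
abbreviation Y_word :: "chr list" where "Y_word \<equiv> map Yc [0..<ylen]"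

text \<open>The remaining x's are matched to y's on diagonal c = shift t k, costing D (q - c) for each
  left-half and D (c + 1) for each right-half character; n_right t counts the latter. For t \<le> p
  the A/B-parts of these matches telescope to A t c + B c l. At t = i the diagonal may still
  move forward for free, hence the minimum in AB_part.\<close>

definition shift :: "nat \<Rightarrow> nat \<Rightarrow> nat" where "shift t k = min (q - 1) (k - t)"
definition n_right :: "nat \<Rightarrow> nat" where "n_right t = xend - max t (p + 1)"
definition D_count :: "nat \<Rightarrow> nat \<Rightarrow> int" where
  "D_count t k = int (p - t) * int (q - shift t k) + int (n_right t) * int (Suc (shift t k))"
definition AB_term :: "nat \<Rightarrow> nat \<Rightarrow> int" where
  "AB_term t j = (if t \<le> p then Aext p A t j + B j l else 0)"
definition AB_part :: "nat \<Rightarrow> nat \<Rightarrow> int" where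
  "AB_part t k
     = (if t = i then (MIN j\<in>{shift t k..<q}. AB_term i j) else AB_term t (shift t k))"
definition potential :: "nat \<Rightarrow> nat \<Rightarrow> int" where
  "potential t k = int (ylen - k) * F + D * D_count t k + AB_part t k"

lemma w_del: "w (Some x) None = F" and w_ins: "w None (Some y) = F"
  by (simp_all add: wgt_def)

lemma D_pos: "D > 0" and four_E_less_D: "4 * E < D"
proof -
  have "E * 4 \<le> E * int ((2*p+1) + (2*p+q))" using p_pos E_pos by (intro mult_left_mono) auto
  then show "4 * E < D" using E_ll_D by linarith
  then show "D > 0" using E_pos by linarith
qed

lemma D_F_bound: "D * (int p + int q + 1) \<le> F"
proof -
  have "D * (int p + int q + 1) \<le> D * int ((2*p+1) + (2*p+q))"
    using D_pos by (intro mult_left_mono) auto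
  then show ?thesis using D_ll_F by linarith
qed

lemma xend_gt_p: "p < xend" and xend_le: "xend \<le> 2*p + 1" and i_le_xend: "i \<le> xend"
  using i_less_p by (auto simp: xend_def)

lemma shift_less: "shift t k < q"
  using q_pos by (simp add: shift_def)

lemma shift_Suc_Suc: "shift (Suc t) (Suc k) = shift t k"
  by (simp add: shift_def)

lemma shift_in_band: "t \<le> k \<Longrightarrow> k < t + q \<Longrightarrow> shift t k = k - t"
  by (simp add: shift_def)

lemma shift_Suc_right: "shift t (Suc k) = shift t k \<or> shift t (Suc k) = Suc (shift t k)"
  unfolding shift_def by linarith

lemma shift_Suc_left: "shift (Suc t) k \<le> shift t k" "shift t k \<le> Suc (shift (Suc t) k)"
  by (auto simp: shift_def)

lemma n_right_le: "n_right t \<le> p"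
  by (simp add: n_right_def xend_def)

lemma D_count_at_start: "D_count i k = int (p - i) * (int q + 1)"
proof -
  have "n_right i = p - i" using i_less_p by (simp add: n_right_def xend_def)
  then show ?thesis using shift_less[of i k] by (simp add: D_count_def of_nat_diff algebra_simps)
qed

lemma D_count_at_end: "D_count xend k = 0"
  using xend_gt_p by (simp add: D_count_def n_right_def)

lemma D_count_step_le:
  assumes "shift (Suc t) k' \<le> shift t k" "shift t k \<le> Suc (shift (Suc t) k')"
  shows "D_count t k - D_count (Suc t) k' \<le> int p + int q"
proof -
  define a where "a = int (p - t)"
  define a' where "a' = int (p - Suc t)"
  define b where "b = int (q - shift t k)"
  define b' where "b' = int (q - shift (Suc t) k')"
  define R where "R = int (n_right t)"
  define R' where "R' = int (n_right (Suc t))"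
  define u where "u = int (shift t k)"
  define u' where "u' = int (shift (Suc t) k')"
  have "b + u = int q" "R \<le> int p" "a - 1 \<le> a'" "0 \<le> a'" "b \<le> b'" "0 \<le> b"
      "R - 1 \<le> R'" "0 \<le> R'" "u \<le> u' + 1" "0 \<le> u"
    using assms shift_less[of t k] n_right_le[of t]
    by (auto simp: a_def a'_def b_def b'_def R_def R'_def u_def u'_def n_right_def)
  then have "(a - 1) * b \<le> a' * b'" "(R - 1) * u \<le> R' * (u' + 1)"
    by (meson mult_mono order.trans zero_le_one add_increasing2)+
  then show ?thesis using \<open>b + u = int q\<close> \<open>R \<le> int p\<close>
    by (simp add: D_count_def a_def a'_def b_def b'_def R_def R'_def u_def u'_def algebra_simps)
qed

lemma AB_term_bounded: "j < q \<Longrightarrow> \<bar>AB_term t j\<bar> \<le> 2 * E"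
  using A_bounded B_bounded E_pos
  by (cases "t < p") (fastforce simp: AB_term_def Aext_def abs_le_iff)+

lemma AB_part_bounded: "\<bar>AB_part t k\<bar> \<le> 2 * E"
proof (cases "t = i")
  case True
  have "(MIN j\<in>{shift t k..<q}. AB_term i j) \<in> AB_term i ` {shift t k..<q}"
    using shift_less[of t k] by (intro Min_in) auto
  then show ?thesis using True AB_term_bounded by (auto simp: AB_part_def)
next
  case False
  then show ?thesis using AB_term_bounded shift_less by (simp add: AB_part_def)
qed

lemma AB_part_le_AB_term: "AB_part t k \<le> AB_term t (shift t k)"
  using shift_less[of t k] by (auto simp: AB_part_def)

lemma match_cost_in_band:
  assumes "t < xend" "j < q"
  shows "w (Some (xchar t)) (Some (Yc (t + j)))
    = F + D * (D_count t (t + j) - D_count (Suc t) (Suc (t + j)))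
        + AB_term t j - AB_term (Suc t) j"
proof -
  have shift: "shift t (t + j) = j" "shift (Suc t) (Suc (t + j)) = j"
    using assms(2) by (simp_all add: shift_def)
  consider "t < p" | "t = p" | "p < t" by linarith
  then show ?thesis
  proof cases
    case 1
    then have "D_count t (t + j) - D_count (Suc t) (Suc (t + j)) = int (q - j)"
      unfolding D_count_def shift by (simp add: n_right_def of_nat_diff algebra_simps)
    then show ?thesis using 1 assms
      by (simp add: wgt_def xchar_def AB_term_def mult.commute)
  next
    case 2
    then have "D_count t (t + j) - D_count (Suc t) (Suc (t + j)) = 0"
      unfolding D_count_def shift by (simp add: n_right_def)
    then show ?thesis using 2 assms
      by (simp add: wgt_def xchar_def AB_term_def Aext_def)
  next
    case 3
    then have "int (n_right t) = int (n_right (Suc t)) + 1"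
      using assms(1) by (simp add: n_right_def)
    then have "D_count t (t + j) - D_count (Suc t) (Suc (t + j)) = int j + 1"
      using 3 unfolding D_count_def shift by (simp add: algebra_simps)
    then show ?thesis using 3 assms xend_le
      by (simp add: wgt_def xchar_def AB_term_def algebra_simps)
  qed
qed

lemma potential_del:
  assumes "t < xend"
  shows "potential t k \<le> F + potential (Suc t) k"
proof -
  have "D * (D_count t k - D_count (Suc t) k) \<le> D * (int p + int q)"
    using D_count_step_le[OF shift_Suc_left] D_pos by (intro mult_left_mono) auto
  then show ?thesis
    using AB_part_bounded[of t k] AB_part_bounded[of "Suc t" k] four_E_less_D D_F_bound
    by (simp add: potential_def algebra_simps abs_le_iff)
qed

lemma potential_ins:
  assumes "i \<le> t" "t \<le> xend" "k < ylen"
  shows "potential t k \<le> F + potential t (Suc k)"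
proof -
  have F_part: "int (ylen - k) * F = F + int (ylen - Suc k) * F"
    using assms(3) by (simp add: of_nat_diff algebra_simps)
  consider (same) "shift t (Suc k) = shift t k" | (incr) "shift t (Suc k) = Suc (shift t k)"
    using shift_Suc_right by blast
  then show ?thesis
  proof cases
    case same
    then show ?thesis using F_part unfolding potential_def D_count_def AB_part_def same by simp
  next
    case incr
    consider (start) "t = i" | (stop) "t = xend" | (inner) "i < t" "t < xend"
      using assms by linarith
    then show ?thesis
    proof cases
      case start
      have "(MIN j\<in>{shift t k..<q}. AB_term i j)
          \<le> (MIN j\<in>{shift t (Suc k)..<q}. AB_term i j)"
        using incr shift_less[of t "Suc k"] by (intro Min_antimono) auto
      then show ?thesis
        using start F_part by (simp add: potential_def D_count_at_start AB_part_def)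
    next
      case stop
      then show ?thesis using F_part xend_gt_p i_less_p
        by (simp add: potential_def D_count_at_end AB_part_def AB_term_def)
    next
      case inner
      have "int (p - t) + 1 \<le> int (n_right t)"
        using inner i_less_p by (simp add: n_right_def xend_def)
      then have "D * 1 \<le> D * (D_count t (Suc k) - D_count t k)"
        using incr shift_less[of t "Suc k"] D_pos
        by (intro mult_left_mono) (simp_all add: D_count_def of_nat_diff algebra_simps)
      then show ?thesis
        using F_part AB_part_bounded[of t k] AB_part_bounded[of t "Suc k"] four_E_less_D
        by (simp add: potential_def algebra_simps abs_le_iff)
    qed
  qed
qed

lemma potential_match:
  assumes "i \<le> t" "t < xend" "k < ylen"
  shows "potential t k \<le> w (Some (xchar t)) (Some (Yc k)) + potential (Suc t) (Suc k)"
proof -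
  have F_part: "int (ylen - k) * F = F + int (ylen - Suc k) * F"
    using assms(3) by (simp add: of_nat_diff algebra_simps)
  show ?thesis
  proof (cases "t \<le> k \<and> k < t + q")
    case True
    then obtain j where j: "k = t + j" "j < q"
      by (metis add_diff_inverse_nat add_less_cancel_left not_le)
    have "AB_part t k \<le> AB_term t j"
      using AB_part_le_AB_term[of t k] shift_in_band[of t k] True j by simp
    moreover have "AB_part (Suc t) (Suc k) = AB_term (Suc t) j"
      using assms(1) shift_in_band True j by (simp add: AB_part_def)
    ultimately show ?thesis using match_cost_in_band[OF assms(2) j(2)] F_part j(1)
      by (simp add: potential_def algebra_simps)
  next
    case False
    then have "w (Some (xchar t)) (Some (Yc k)) = 2 * F" by (auto simp: wgt_def xchar_def)
    moreover have "D * (D_count t k - D_count (Suc t) (Suc k)) \<le> D * (int p + int q)"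
      using D_count_step_le[of t "Suc k" k] shift_Suc_Suc D_pos by (intro mult_left_mono) auto
    ultimately show ?thesis
      using F_part AB_part_bounded[of t k] AB_part_bounded[of "Suc t" "Suc k"]
        four_E_less_D D_F_bound
      by (simp add: potential_def algebra_simps abs_le_iff)
  qed
qed

lemma potential_at_end: "potential xend ylen = 0"
  using xend_gt_p i_less_p by (simp add: potential_def D_count_at_end AB_part_def AB_term_def)

lemma AB_term_at_start: "AB_term i j = A i j + B j l"
  using i_less_p by (simp add: AB_term_def Aext_def)

lemma AB_part_at_start: "AB_part i 0 = (MIN j\<in>{..<q}. AB_term i j)"
  by (simp add: AB_part_def shift_def atLeast0LessThan)

lemma potential_at_start:
  "potential i 0 = int ylen * F + int ((p - i) * (q + 1)) * D + (MIN j\<in>{..<q}. A i j + B j l)"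
proof -
  have "AB_part i 0 = (MIN j\<in>{..<q}. A i j + B j l)"
    by (simp add: AB_part_at_start AB_term_at_start)
  moreover have "int ((p - i) * (q + 1)) = int (p - i) * (int q + 1)"
    by (simp only: of_nat_mult of_nat_add of_nat_1)
  ultimately show ?thesis unfolding potential_def D_count_at_start by (simp add: algebra_simps)
qed

lemma potential_at_start_le_acost:
  assumes "acost w X_frag Y_word ss = Some c"
  shows "potential i 0 \<le> c"
proof -
  have "potential (i + 0) 0 \<le> c"
  proof (rule acost_ge_potential[where \<Phi> = "\<lambda>s k. potential (i + s) k", OF _ _ _ _ assms])
    show "potential (i + length X_frag) (length Y_word) \<le> 0"
      using i_le_xend potential_at_end by simp
  qed (use i_le_xend in
      \<open>auto simp: w_del w_ins intro!: potential_del potential_ins potential_match\<close>)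
  then show ?thesis by simp
qed

lemma diagonal_match_sum:
  assumes "j < q"
  shows "(\<Sum>t=i..<xend. w (Some (xchar t)) (Some (Yc (t + j))))
    = int (xend - i) * F + D * D_count i (i + j) + AB_term i j"
proof -
  define f where "f t = D * D_count t (t + j) + AB_term t j" for t
  have "(\<Sum>t=i..<xend. w (Some (xchar t)) (Some (Yc (t + j))))
      = (\<Sum>t=i..<xend. F - (f (Suc t) - f t))"
    using match_cost_in_band \<open>j < q\<close>
    by (intro sum.cong) (simp_all add: f_def algebra_simps)
  also have "\<dots> = int (xend - i) * F - (f xend - f i)"
    using sum_Suc_diff'[OF i_le_xend, of f] by (simp add: sum_subtractf)
  also have "f xend = 0" using xend_gt_p by (simp add: f_def D_count_at_end AB_term_def)
  finally show ?thesis by (simp add: f_def)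
qed

definition diagonal_alignment :: "nat \<Rightarrow> step list" where
  "diagonal_alignment j
     = replicate (i + j) Ins @ replicate (xend - i) Match @ replicate (ylen - xend - j) Ins"

lemma diagonal_alignment_cost:
  assumes "j < q"
  shows "acost w X_frag Y_word (diagonal_alignment j)
    = Some (int ylen * F + D * D_count i 0 + AB_term i j)"
proof -
  have "xend + j \<le> ylen" using i_less_p assms by (simp add: xend_def ylen_def)
  have upt_split: "[a..<c] = [a..<b] @ [b..<c]" if "a \<le> b" "b \<le> c" for a b c :: nat
    using upt_add_eq_append[of a b "c - b"] that by simp
  define Y1 where "Y1 = map Yc [0..<i + j]"
  define Y2 where "Y2 = map (\<lambda>t. Yc (t + j)) [i..<xend]"
  define Y3 where "Y3 = map Yc [xend + j..<ylen]"
  have "[i + j..<xend + j] = map (\<lambda>t. t + j) [i..<xend]"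
    by (rule nth_equalityI) auto
  then have Y: "Y_word = Y1 @ Y2 @ Y3"
    using upt_split[of 0 "i + j" ylen] upt_split[of "i + j" "xend + j" ylen]
      i_le_xend \<open>xend + j \<le> ylen\<close>
    by (simp add: Y1_def Y2_def Y3_def)
  have "diagonal_alignment j
      = replicate (length Y1) Ins @ replicate (length X_frag) Match @ replicate (length Y3) Ins"
    by (simp add: diagonal_alignment_def Y1_def Y3_def)
  then have cost: "acost w X_frag Y_word (diagonal_alignment j)
      = Some ((\<Sum>y\<leftarrow>Y1. F) + (\<Sum>(x, y)\<leftarrow>zip X_frag Y2. w (Some x) (Some y))
          + (\<Sum>y\<leftarrow>Y3. F))"
    using acost_Ins_prefix[of w X_frag Y1] acost_Match_prefix[of X_frag Y2 w "[]" Y3]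
      acost_Ins_prefix[of w "[]" Y3 "[]" "[]"]
    by (simp add: Y Y2_def w_ins add.assoc)
  have match_part: "(\<Sum>(x, y)\<leftarrow>zip X_frag Y2. w (Some x) (Some y))
      = (\<Sum>t=i..<xend. w (Some (xchar t)) (Some (Yc (t + j))))"
    by (simp add: Y2_def zip_map_map zip_same_conv_map interv_sum_list_conv_sum_set_nat)
  have ins_part: "(\<Sum>y\<leftarrow>Y1. F) + (\<Sum>y\<leftarrow>Y3. F) = int (ylen - (xend - i)) * F"
    using i_le_xend \<open>xend + j \<le> ylen\<close>
    by (simp add: Y1_def Y3_def map_replicate_const sum_list_replicate of_nat_diff algebra_simps)
  show ?thesis
    using cost match_part ins_part diagonal_match_sum[OF assms] \<open>xend + j \<le> ylen\<close>
    by (simp add: D_count_at_start algebra_simps)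
qed

lemma ed_w_fragment:
  "ed_w w X_frag Y_word = potential i 0
   \<and> (\<exists>ss. acost w X_frag Y_word ss = Some (potential i 0) \<and> Del \<notin> set ss)"
proof -
  have "(MIN j\<in>{..<q}. AB_term i j) \<in> AB_term i ` {..<q}"
    using q_pos by (intro Min_in) (auto simp: lessThan_empty_iff)
  then obtain j where "j < q" and j_min: "AB_term i j = (MIN j\<in>{..<q}. AB_term i j)" by auto
  have opt: "acost w X_frag Y_word (diagonal_alignment j) = Some (potential i 0)"
    using diagonal_alignment_cost[OF \<open>j < q\<close>] j_min
    by (simp add: potential_def AB_part_at_start)
  moreover have "ed_w w X_frag Y_word = potential i 0"
    by (rule ed_w_eqI[OF opt]) (rule potential_at_start_le_acost)
  moreover have "Del \<notin> set (diagonal_alignment j)" by (simp add: diagonal_alignment_def)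
  ultimately show ?thesis by blast
qed

end

theorem lemma6p1:
  fixes p q r :: nat and E D F :: int
    and A B :: "nat \<Rightarrow> nat \<Rightarrow> int"
  assumes "p \<ge> 1" "q \<ge> 1" "r \<ge> 1" "E > 0" "D > 0" "F > 0"
    and "\<forall>i<p. \<forall>j<q. -E \<le> A i j \<and> A i j \<le> E"
    and "\<forall>j<q. \<forall>l<r. -E \<le> B j l \<and> B j l \<le> E"
    and "E * int ((2*p+1) + (2*p+q)) < D"
    and "D * int ((2*p+1) + (2*p+q)) < F"
    and "l < r" and "i < p"
  shows "ed_w (wgt p q A B D F) (frag (Xword p l) i (length (Xword p l) - i)) (Yword p q)
           = int (length (Yword p q)) * F + int ((p - i) * (q + 1)) * D
             + (MIN j\<in>{..<q}. A i j + B j l)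
       \<and> (\<exists>ss. acost (wgt p q A B D F) (frag (Xword p l) i (length (Xword p l) - i)) (Yword p q) ss
              = Some (ed_w (wgt p q A B D F) (frag (Xword p l) i (length (Xword p l) - i)) (Yword p q))
            \<and> Del \<notin> set ss)"
proof -
  interpret min_plus_gadget p q E D F A B l i
    using assms by unfold_locales auto
  have X: "frag (Xword p l) i (length (Xword p l) - i) = X_frag"
    by (simp add: frag_def Xword_def xchar_def xend_def take_map drop_map del: upt_Suc)
  have Y: "Yword p q = Y_word"
    by (simp add: Yword_def ylen_def)
  show ?thesis
    unfolding X Y using ed_w_fragment potential_at_start by (simp add: ylen_def)
qed

end
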